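(* In the setting described in the context, the length $N$ of any full route satisfies $N\le b^{\max}|E|/2$, where $b^{\max}=\max_{e\in E}b(e)$.
   Context: Let $G=(V,E)$ be a finite bipartite graph with color classes $W$ and $F$; the edge joining $w\in W$ and $f\in F$ is written $wf$. Let $b\in\mathbb Z_+^E$ be capacities. For $v\in V$, let $E_v$ be the set of edges incident to $v$, $\mathcal B_v=\{z\in\mathbb Z_+^{E_v}: z(e)\le b(e)\}$, $\mathbf 1^e$ the unit vector of $e$, $|z|=\sum_e|z(e)|$, $\wedge,\vee$ componentwise min and max. Each $v$ has a choice function $C_v:\mathcal B_v\to\mathcal B_v$ with $C_v(z)\le z$, satisfying for all $z,z'$: (A1) $z\ge z'\ge C_v(z)\Rightarrow C_v(z')=C_v(z)$; (A2) $z\ge z'\Rightarrow C_v(z)\wedge z'\le C_v(z')$; (A3) $z\ge z'\Rightarrow |C_v(z)|\ge|C_v(z')|$. Acceptable: $C_v(z)=z$; for distinct acceptable $z,z'$, $z'\prec_v z$ iff $C_v(z\vee z')=z$. $x_v$ is the restriction of $x$ to $E_v$; a g-matching is $x\in\mathbb Z_+^E$, $x\le b$, all $x_v$ acceptable; $x\prec_F y$ (distinct) iff $x_f\preceq_f y_f$ for all $f\in F$. Edge $e\in E_v$ is interesting for $v$ under acceptable $z$ if some $z'\in\mathcal B_v$ has $z'(e)>z(e)$, $z'(e')=z(e')$ for $e'\ne e$, $C_v(z')(e)>z(e)$; $e=wf$ blocks g-matching $x$ if it is interesting for $w$ under $x_w$ and for $f$ under $x_f$. $\mathcal S$ is the set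 of g-matchings with no blocking edge (stable); $(\mathcal S,\prec_F)$ is a nonempty finite distributive lattice with minimum $x^{\min}$ and maximum $x^{\max}$. Rotations: for $x\in\mathcal S$, $U_F^+(x)$ = edges $wf$ interesting for $f$ under $x_f$; $U_F^-(x)$ = edges $wf$ with $x(wf)>0$ not interesting for $f$. Legal $f$-pair: $(a,c)$, $a\in U_F^+(x)\cap E_f$, $c\in E_f\setminus\{a\}$, $C_f(x_f+\mathbf 1^a)=x_f+\mathbf 1^a-\mathbf 1^c$. Legal $w$-pair: $(c,a)$, $c\in U_F^-(x)\cap E_w$, $a\in U_F^+(x)\cap E_w$, $x_w+\mathbf 1^a-\mathbf 1^c$ acceptable for $w$; essential if no $d\in(U_F^+(x)\cap E_w)\setminus\{a\}$ is interesting for $w$ under $x_w+\mathbf 1^a-\mathbf 1^c$. Digraph with vertices $w^e,f^e$ for each $e=wf\in U_F^+(x)\cup U_F^-(x)$, arcs $(w^a,f^a)$ ($a\in U_F^+$), $(f^c,w^c)$ ($c\in U_F^-$), $(f^a,f^c)$ for legal $f$-pairs, $(w^c,w^a)$ for essential $w$-pairs; after repeatedly deleting vertices with no entering arc, the remaining directed cycles correspond to cyclic sequences $(a_1,c_1,\dots,a_k,c_k)$ of distinct edges of $G$, the rotations $R\in\mathcal R(x)$ applicable to $x$, with $\chi^R$ equal to $+1$ on the $a_i$, $-1$ on the $c_i$, $0$ elsewhere. $\tau_R(x)$ is the maximum $\lambda$ with $x+i\chi^R\in\mathcal S$ for $i=1,\dots,\lambda$. A full route is a sequence $x^{\min}=x_0,\dots,x_N=x^{\max}$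 with $x_i=x_{i-1}+\tau_{R_i}(x_{i-1})\chi^{R_i}$, $R_i\in\mathcal R(x_{i-1})$; $N$ is its length. *)

theory Defs
  imports Main "HOL-Library.Function_Algebras"
begin

text \<open>Vectors in Z_+^{E_v} are represented as int-valued functions on edges that
vanish outside E_v.  Edges of the bipartite graph are pairs (w,f) with w in W, f in F.\<close>

definition inB :: "'e set \<Rightarrow> ('e \<Rightarrow> nat) \<Rightarrow> ('e \<Rightarrow> int) \<Rightarrow> bool" where
  "inB Ev b z \<equiv> (\<forall>e. (e \<in> Ev \<longrightarrow> 0 \<le> z e \<and> z e \<le> int (b e)) \<and> (e \<notin> Ev \<longrightarrow> z e = 0))"

definition vnorm :: "'e set \<Rightarrow> ('e \<Rightarrow> int) \<Rightarrow> int" where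
  "vnorm Ev z = (\<Sum>e\<in>Ev. \<bar>z e\<bar>)"

definition unitv :: "'e \<Rightarrow> ('e \<Rightarrow> int)" where
  "unitv a = (\<lambda>e. if e = a then 1 else 0)"

definition restr :: "'e set \<Rightarrow> ('e \<Rightarrow> int) \<Rightarrow> ('e \<Rightarrow> int)" where
  "restr Ev x = (\<lambda>e. if e \<in> Ev then x e else 0)"

definition choice_fun :: "'e set \<Rightarrow> ('e \<Rightarrow> nat) \<Rightarrow> (('e \<Rightarrow> int) \<Rightarrow> ('e \<Rightarrow> int)) \<Rightarrow> bool" where
  "choice_fun Ev b Cv \<equiv>
     (\<forall>z. inB Ev b z \<longrightarrow> inB Ev b (Cv z) \<and> Cv z \<le> z) \<and>
     \<comment> \<open>(A1)\<close>
     (\<forall>z z'. inB Ev b z \<longrightarrow> inB Ev b z' \<longrightarrow> z \<ge> z' \<longrightarrow> z' \<ge> Cv z \<longrightarrow> Cv z' = Cv z) \<and>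
     \<comment> \<open>(A2)\<close>
     (\<forall>z z'. inB Ev b z \<longrightarrow> inB Ev b z' \<longrightarrow> z \<ge> z' \<longrightarrow> inf (Cv z) z' \<le> Cv z') \<and>
     \<comment> \<open>(A3)\<close>
     (\<forall>z z'. inB Ev b z \<longrightarrow> inB Ev b z' \<longrightarrow> z \<ge> z' \<longrightarrow> vnorm Ev (Cv z) \<ge> vnorm Ev (Cv z'))"

definition acceptable :: "'e set \<Rightarrow> ('e \<Rightarrow> nat) \<Rightarrow> (('e \<Rightarrow> int) \<Rightarrow> ('e \<Rightarrow> int)) \<Rightarrow> ('e \<Rightarrow> int) \<Rightarrow> bool" where
  "acceptable Ev b Cv z \<equiv> inB Ev b z \<and> Cv z = z"

definition pref_less :: "'e set \<Rightarrow> ('e \<Rightarrow> nat) \<Rightarrow> (('e \<Rightarrow> int) \<Rightarrow> ('e \<Rightarrow> int)) \<Rightarrow> ('e \<Rightarrow> int) \<Rightarrow> ('e \<Rightarrow> int) \<Rightarrow> bool" where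
  "pref_less Ev b Cv z' z \<equiv> acceptable Ev b Cv z \<and> acceptable Ev b Cv z' \<and> z \<noteq> z' \<and> Cv (sup z z') = z"

definition pref_le :: "'e set \<Rightarrow> ('e \<Rightarrow> nat) \<Rightarrow> (('e \<Rightarrow> int) \<Rightarrow> ('e \<Rightarrow> int)) \<Rightarrow> ('e \<Rightarrow> int) \<Rightarrow> ('e \<Rightarrow> int) \<Rightarrow> bool" where
  "pref_le Ev b Cv z' z \<equiv> z' = z \<or> pref_less Ev b Cv z' z"

definition interesting :: "'e set \<Rightarrow> ('e \<Rightarrow> nat) \<Rightarrow> (('e \<Rightarrow> int) \<Rightarrow> ('e \<Rightarrow> int)) \<Rightarrow> ('e \<Rightarrow> int) \<Rightarrow> 'e \<Rightarrow> bool" where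
  "interesting Ev b Cv z e \<equiv> e \<in> Ev \<and>
     (\<exists>z'. inB Ev b z' \<and> z' e > z e \<and> (\<forall>e'. e' \<noteq> e \<longrightarrow> z' e' = z e') \<and> Cv z' e > z e)"

definition Ew :: "('w \<times> 'f) set \<Rightarrow> 'w \<Rightarrow> ('w \<times> 'f) set" where
  "Ew E w = {e \<in> E. fst e = w}"

definition Ef :: "('w \<times> 'f) set \<Rightarrow> 'f \<Rightarrow> ('w \<times> 'f) set" where
  "Ef E f = {e \<in> E. snd e = f}"

type_synonym ('w, 'f) vec = "('w \<times> 'f) \<Rightarrow> int"
type_synonym ('w, 'f) cfun = "('w, 'f) vec \<Rightarrow> ('w, 'f) vec"

definition gmatching :: "'w set \<Rightarrow> 'f set \<Rightarrow> ('w \<times> 'f) set \<Rightarrow> ('w \<times> 'f \<Rightarrow> nat)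
    \<Rightarrow> ('w \<Rightarrow> ('w, 'f) cfun) \<Rightarrow> ('f \<Rightarrow> ('w, 'f) cfun) \<Rightarrow> ('w, 'f) vec \<Rightarrow> bool" where
  "gmatching W F E b Cw Cf x \<equiv>
     (\<forall>e. e \<notin> E \<longrightarrow> x e = 0) \<and> (\<forall>e\<in>E. 0 \<le> x e \<and> x e \<le> int (b e)) \<and>
     (\<forall>w\<in>W. acceptable (Ew E w) b (Cw w) (restr (Ew E w) x)) \<and>
     (\<forall>f\<in>F. acceptable (Ef E f) b (Cf f) (restr (Ef E f) x))"

definition blocking :: "('w \<times> 'f) set \<Rightarrow> ('w \<times> 'f \<Rightarrow> nat)
    \<Rightarrow> ('w \<Rightarrow> ('w, 'f) cfun) \<Rightarrow> ('f \<Rightarrow> ('w, 'f) cfun) \<Rightarrow> ('w, 'f) vec \<Rightarrow> ('w \<times> 'f) \<Rightarrow> bool" where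
  "blocking E b Cw Cf x e \<equiv> e \<in> E \<and>
     interesting (Ew E (fst e)) b (Cw (fst e)) (restr (Ew E (fst e)) x) e \<and>
     interesting (Ef E (snd e)) b (Cf (snd e)) (restr (Ef E (snd e)) x) e"

definition stable :: "'w set \<Rightarrow> 'f set \<Rightarrow> ('w \<times> 'f) set \<Rightarrow> ('w \<times> 'f \<Rightarrow> nat)
    \<Rightarrow> ('w \<Rightarrow> ('w, 'f) cfun) \<Rightarrow> ('f \<Rightarrow> ('w, 'f) cfun) \<Rightarrow> ('w, 'f) vec \<Rightarrow> bool" where
  "stable W F E b Cw Cf x \<equiv> gmatching W F E b Cw Cf x \<and> (\<nexists>e. blocking E b Cw Cf x e)"

definition Fle :: "'f set \<Rightarrow> ('w \<times> 'f) set \<Rightarrow> ('w \<times> 'f \<Rightarrow> nat)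
    \<Rightarrow> ('f \<Rightarrow> ('w, 'f) cfun) \<Rightarrow> ('w, 'f) vec \<Rightarrow> ('w, 'f) vec \<Rightarrow> bool" where
  "Fle F E b Cf x y \<equiv> x = y \<or> (\<forall>f\<in>F. pref_le (Ef E f) b (Cf f) (restr (Ef E f) x) (restr (Ef E f) y))"

definition is_xmin :: "'w set \<Rightarrow> 'f set \<Rightarrow> ('w \<times> 'f) set \<Rightarrow> ('w \<times> 'f \<Rightarrow> nat)
    \<Rightarrow> ('w \<Rightarrow> ('w, 'f) cfun) \<Rightarrow> ('f \<Rightarrow> ('w, 'f) cfun) \<Rightarrow> ('w, 'f) vec \<Rightarrow> bool" where
  "is_xmin W F E b Cw Cf x \<equiv> stable W F E b Cw Cf x \<and>
     (\<forall>y. stable W F E b Cw Cf y \<longrightarrow> Fle F E b Cf x y)"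

definition is_xmax :: "'w set \<Rightarrow> 'f set \<Rightarrow> ('w \<times> 'f) set \<Rightarrow> ('w \<times> 'f \<Rightarrow> nat)
    \<Rightarrow> ('w \<Rightarrow> ('w, 'f) cfun) \<Rightarrow> ('f \<Rightarrow> ('w, 'f) cfun) \<Rightarrow> ('w, 'f) vec \<Rightarrow> bool" where
  "is_xmax W F E b Cw Cf x \<equiv> stable W F E b Cw Cf x \<and>
     (\<forall>y. stable W F E b Cw Cf y \<longrightarrow> Fle F E b Cf y x)"

definition Uplus :: "('w \<times> 'f) set \<Rightarrow> ('w \<times> 'f \<Rightarrow> nat)
    \<Rightarrow> ('f \<Rightarrow> ('w, 'f) cfun) \<Rightarrow> ('w, 'f) vec \<Rightarrow> ('w \<times> 'f) set" where
  "Uplus E b Cf x = {e \<in> E. interesting (Ef E (snd e)) b (Cf (snd e)) (restr (Ef E (snd e)) x) e}"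

definition Uminus :: "('w \<times> 'f) set \<Rightarrow> ('w \<times> 'f \<Rightarrow> nat)
    \<Rightarrow> ('f \<Rightarrow> ('w, 'f) cfun) \<Rightarrow> ('w, 'f) vec \<Rightarrow> ('w \<times> 'f) set" where
  "Uminus E b Cf x = {e \<in> E. x e > 0 \<and> \<not> interesting (Ef E (snd e)) b (Cf (snd e)) (restr (Ef E (snd e)) x) e}"

definition legal_fpair :: "('w \<times> 'f) set \<Rightarrow> ('w \<times> 'f \<Rightarrow> nat)
    \<Rightarrow> ('f \<Rightarrow> ('w, 'f) cfun) \<Rightarrow> ('w, 'f) vec \<Rightarrow> ('w \<times> 'f) \<Rightarrow> ('w \<times> 'f) \<Rightarrow> bool" where
  "legal_fpair E b Cf x a c \<equiv>
     (let f = snd a; xf = restr (Ef E f) x in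
       a \<in> Uplus E b Cf x \<inter> Ef E f \<and> c \<in> Ef E f - {a} \<and>
       Cf f (xf + unitv a) = xf + unitv a - unitv c)"

definition legal_wpair :: "('w \<times> 'f) set \<Rightarrow> ('w \<times> 'f \<Rightarrow> nat) \<Rightarrow> ('w \<Rightarrow> ('w, 'f) cfun)
    \<Rightarrow> ('f \<Rightarrow> ('w, 'f) cfun) \<Rightarrow> ('w, 'f) vec \<Rightarrow> ('w \<times> 'f) \<Rightarrow> ('w \<times> 'f) \<Rightarrow> bool" where
  "legal_wpair E b Cw Cf x c a \<equiv>
     (let w = fst c; xw = restr (Ew E w) x in
       c \<in> Uminus E b Cf x \<inter> Ew E w \<and> a \<in> Uplus E b Cf x \<inter> Ew E w \<and>
       acceptable (Ew E w) b (Cw w) (xw + unitv a - unitv c))"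

definition essential_wpair :: "('w \<times> 'f) set \<Rightarrow> ('w \<times> 'f \<Rightarrow> nat) \<Rightarrow> ('w \<Rightarrow> ('w, 'f) cfun)
    \<Rightarrow> ('f \<Rightarrow> ('w, 'f) cfun) \<Rightarrow> ('w, 'f) vec \<Rightarrow> ('w \<times> 'f) \<Rightarrow> ('w \<times> 'f) \<Rightarrow> bool" where
  "essential_wpair E b Cw Cf x c a \<equiv> legal_wpair E b Cw Cf x c a \<and>
     (let w = fst c; xw = restr (Ew E w) x in
       \<not> (\<exists>d \<in> (Uplus E b Cf x \<inter> Ew E w) - {a}.
            interesting (Ew E w) b (Cw w) (xw + unitv a - unitv c) d))"

text \<open>Digraph: vertex (e, True) is w^e, vertex (e, False) is f^e.\<close>
definition dverts :: "('w \<times> 'f) set \<Rightarrow> ('w \<times> 'f \<Rightarrow> nat)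
    \<Rightarrow> ('f \<Rightarrow> ('w, 'f) cfun) \<Rightarrow> ('w, 'f) vec \<Rightarrow> (('w \<times> 'f) \<times> bool) set" where
  "dverts E b Cf x = (Uplus E b Cf x \<union> Uminus E b Cf x) \<times> UNIV"

definition darcs :: "('w \<times> 'f) set \<Rightarrow> ('w \<times> 'f \<Rightarrow> nat) \<Rightarrow> ('w \<Rightarrow> ('w, 'f) cfun)
    \<Rightarrow> ('f \<Rightarrow> ('w, 'f) cfun) \<Rightarrow> ('w, 'f) vec \<Rightarrow> ((('w \<times> 'f) \<times> bool) \<times> (('w \<times> 'f) \<times> bool)) set" where
  "darcs E b Cw Cf x =
    ({((a, True), (a, False)) | a. a \<in> Uplus E b Cf x} \<union>
     {((c, False), (c, True)) | c. c \<in> Uminus E b Cf x} \<union>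
     {((a, False), (c, False)) | a c. legal_fpair E b Cf x a c} \<union>
     {((c, True), (a, True)) | c a. essential_wpair E b Cw Cf x c a})
    \<inter> (dverts E b Cf x \<times> dverts E b Cf x)"

text \<open>Vertices surviving the repeated deletion of vertices with no entering arc:
  the largest vertex subset in which every vertex has an entering arc from the subset.\<close>
definition dremain :: "('w \<times> 'f) set \<Rightarrow> ('w \<times> 'f \<Rightarrow> nat) \<Rightarrow> ('w \<Rightarrow> ('w, 'f) cfun)
    \<Rightarrow> ('f \<Rightarrow> ('w, 'f) cfun) \<Rightarrow> ('w, 'f) vec \<Rightarrow> (('w \<times> 'f) \<times> bool) set" where
  "dremain E b Cw Cf x = \<Union>{X. X \<subseteq> dverts E b Cf x \<and>
      (\<forall>v\<in>X. \<exists>u\<in>X. (u, v) \<in> darcs E b Cw Cf x)}"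

text \<open>The digraph cycle w^{a1} f^{a1} f^{c1} w^{c1} w^{a2} ... of a sequence [a1,c1,...,ak,ck].\<close>
definition cycle_verts :: "('w \<times> 'f) list \<Rightarrow> (('w \<times> 'f) \<times> bool) list" where
  "cycle_verts R = concat (map (\<lambda>j. if even j then [(R ! j, True), (R ! j, False)]
                                   else [(R ! j, False), (R ! j, True)]) [0..<length R])"

text \<open>R is a rotation applicable to the stable x: a directed cycle of the remaining digraph,
  given by a cyclic sequence (a1,c1,...,ak,ck) of distinct edges.\<close>
definition rotation :: "'w set \<Rightarrow> 'f set \<Rightarrow> ('w \<times> 'f) set \<Rightarrow> ('w \<times> 'f \<Rightarrow> nat)
    \<Rightarrow> ('w \<Rightarrow> ('w, 'f) cfun) \<Rightarrow> ('f \<Rightarrow> ('w, 'f) cfun) \<Rightarrow> ('w, 'f) vec \<Rightarrow> ('w \<times> 'f) list \<Rightarrow> bool" where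
  "rotation W F E b Cw Cf x R \<equiv> stable W F E b Cw Cf x \<and>
     R \<noteq> [] \<and> even (length R) \<and> distinct R \<and>
     (let vs = cycle_verts R in
       \<forall>i < length vs. vs ! i \<in> dremain E b Cw Cf x \<and>
         (vs ! i, vs ! ((i + 1) mod length vs)) \<in> darcs E b Cw Cf x)"

definition chi :: "('w \<times> 'f) list \<Rightarrow> ('w, 'f) vec" where
  "chi R = (\<lambda>e. \<Sum>j<length R. if R ! j = e then (if even j then 1 else -1) else 0)"

definition tau :: "'w set \<Rightarrow> 'f set \<Rightarrow> ('w \<times> 'f) set \<Rightarrow> ('w \<times> 'f \<Rightarrow> nat)
    \<Rightarrow> ('w \<Rightarrow> ('w, 'f) cfun) \<Rightarrow> ('f \<Rightarrow> ('w, 'f) cfun) \<Rightarrow> ('w, 'f) vec \<Rightarrow> ('w \<times> 'f) list \<Rightarrow> nat" where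
  "tau W F E b Cw Cf x R = (GREATEST lam::nat. \<forall>i\<in>{1..lam}.
       stable W F E b Cw Cf (\<lambda>e. x e + int i * chi R e))"

text \<open>A full route x_0, ..., x_N (list xs) with rotations R_1, ..., R_N (list Rs, 0-indexed).\<close>
definition full_route :: "'w set \<Rightarrow> 'f set \<Rightarrow> ('w \<times> 'f) set \<Rightarrow> ('w \<times> 'f \<Rightarrow> nat)
    \<Rightarrow> ('w \<Rightarrow> ('w, 'f) cfun) \<Rightarrow> ('f \<Rightarrow> ('w, 'f) cfun)
    \<Rightarrow> ('w, 'f) vec list \<Rightarrow> ('w \<times> 'f) list list \<Rightarrow> bool" where
  "full_route W F E b Cw Cf xs Rs \<equiv>
     length xs = Suc (length Rs) \<and>
     is_xmin W F E b Cw Cf (xs ! 0) \<and> is_xmax W F E b Cw Cf (xs ! length Rs) \<and>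
     (\<forall>i < length Rs. rotation W F E b Cw Cf (xs ! i) (Rs ! i) \<and>
        xs ! Suc i = (\<lambda>e. (xs ! i) e + int (tau W F E b Cw Cf (xs ! i) (Rs ! i)) * chi (Rs ! i) e))"

end

(*
  Every rotation has at least two a-edges: a rotation (a_1, c_1) of length two would have a_1
  and c_1 at the same f (legal f-pair) and at the same w (w-pair), forcing a_1 = c_1. Hence 2N is
  at most the number of pairs (i, e) with e an a-edge of R_i, and it suffices to show that every
  edge e is an a-edge of at most b(e) rotations of the route.

  This follows from two properties of a step from a stable x to y = x + t chi^R with t >= 1 and
  y stable. First, x + chi^R is stable, so tau_R(x) >= 1 and each a-edge rises by at least one.
  Second, U_F^+(y) is contained in U_F^+(x): each c-edge becomes interesting for its w, hence,
  y being stable, uninteresting for its f; so f chooses y_f from the join of x_f and y_f, and an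
  edge interesting for f under the preferred y_f was already interesting under x_f. Since c-edges
  lie in U_F^-(x), an edge that has once been lowered is never an a-edge again, while before that
  its value, bounded by b(e), rises with every rotation of which it is an a-edge.
*)

theory Submission
  imports Defs "HOL-Library.Indicator_Function"
begin

section \<open>Choice functions at a single vertex\<close>

lemma inB_nonneg: "inB Ev b z \<Longrightarrow> 0 \<le> z e"
  unfolding inB_def by (cases "e \<in> Ev") auto

lemma inB_le_cap: "inB Ev b z \<Longrightarrow> z e \<le> int (b e)"
  unfolding inB_def by (cases "e \<in> Ev") auto

lemma inB_outside: "inB Ev b z \<Longrightarrow> e \<notin> Ev \<Longrightarrow> z e = 0"
  unfolding inB_def by auto

lemma inB_fun_upd:
  assumes "inB Ev b z" "e \<in> Ev" "0 \<le> k" "k \<le> int (b e)"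
  shows "inB Ev b (z(e := k))"
  using assms by (auto simp: inB_def)

lemma inB_sup: "inB Ev b u \<Longrightarrow> inB Ev b z \<Longrightarrow> inB Ev b (sup u z)"
  by (auto simp: inB_def sup_max)

lemma inB_below: "inB Ev b T \<Longrightarrow> (\<And>e. 0 \<le> z e) \<Longrightarrow> z \<le> T \<Longrightarrow> inB Ev b z"
  unfolding inB_def le_fun_def by (metis order_antisym order_trans)

lemma inB_restr:
  "(\<And>e. e \<in> Ev \<Longrightarrow> 0 \<le> x e \<and> x e \<le> int (b e)) \<Longrightarrow> inB Ev b (restr Ev x)"
  by (auto simp: inB_def restr_def)

lemma vnorm_inB: "inB Ev b z \<Longrightarrow> vnorm Ev z = sum z Ev"
  using inB_nonneg[of Ev b z] by (simp add: vnorm_def)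

locale choice_function =
  fixes Ev :: "'e set" and b :: "'e \<Rightarrow> nat" and C :: "('e \<Rightarrow> int) \<Rightarrow> 'e \<Rightarrow> int"
  assumes choice_fun: "choice_fun Ev b C" and finite_Ev: "finite Ev"
begin

lemma C_inB: "inB Ev b z \<Longrightarrow> inB Ev b (C z)"
  using choice_fun unfolding choice_fun_def by blast

lemma C_le: "inB Ev b z \<Longrightarrow> C z \<le> z"
  using choice_fun unfolding choice_fun_def by blast

lemma C_le_apply: "inB Ev b z \<Longrightarrow> C z e \<le> z e"
  using C_le by (simp add: le_fun_def)

lemma consistency:
  "inB Ev b z \<Longrightarrow> inB Ev b z' \<Longrightarrow> z' \<le> z \<Longrightarrow> C z \<le> z' \<Longrightarrow> C z' = C z"
  using choice_fun unfolding choice_fun_def by blast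

lemma substitutability:
  assumes "inB Ev b z" "inB Ev b z'" "z' \<le> z"
  shows "min (C z e) (z' e) \<le> C z' e"
proof -
  have "inf (C z) z' \<le> C z'"
    using assms choice_fun unfolding choice_fun_def by blast
  then show ?thesis by (simp add: le_fun_def inf_min)
qed

lemma size_monotonicity:
  "inB Ev b z \<Longrightarrow> inB Ev b z' \<Longrightarrow> z' \<le> z \<Longrightarrow> vnorm Ev (C z') \<le> vnorm Ev (C z)"
  using choice_fun unfolding choice_fun_def by blast

lemma vnorm_less:
  assumes "inB Ev b v" "inB Ev b y" "v \<le> y" "e \<in> Ev" "v e < y e"
  shows "vnorm Ev v < vnorm Ev y"
  using assms sum_strict_mono_ex1[OF finite_Ev, of v y]
  by (auto simp: vnorm_inB le_fun_def)

lemma eq_if_le_vnorm_le: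
  assumes v: "inB Ev b v" and y: "inB Ev b y" and "v \<le> y" "vnorm Ev y \<le> vnorm Ev v"
  shows "v = y"
proof (rule ccontr)
  assume "v \<noteq> y"
  then obtain e where "v e \<noteq> y e" by blast
  moreover have "e \<in> Ev" using calculation inB_outside[OF v] inB_outside[OF y] by metis
  ultimately have "vnorm Ev v < vnorm Ev y"
    using assms by (intro vnorm_less) (auto simp: le_fun_def order_less_le)
  then show False using assms(4) by simp
qed

lemma vnorm_exchange:
  assumes "inB Ev b X" "inB Ev b (X + indicator A - indicator B)" "A \<subseteq> Ev" "B \<subseteq> Ev"
  shows "vnorm Ev (X + indicator A - indicator B) = vnorm Ev X + int (card A) - int (card B)"
proof -
  have "\<And>S. S \<subseteq> Ev \<Longrightarrow> (\<Sum>e\<in>Ev. indicator S e) = int (card S)"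
    using finite_Ev by (simp add: indicator_def Int_absorb1 Collect_mem_eq)
  then show ?thesis
    using assms by (simp add: vnorm_inB sum.distrib sum_subtractf)
qed

lemma acceptable_if_chosen:
  "inB Ev b T \<Longrightarrow> C T = Y \<Longrightarrow> acceptable Ev b C Y"
  using consistency[of T Y] C_inB[of T] C_le[of T] by (auto simp: acceptable_def)

lemma C_fun_upd_uninteresting:
  assumes acc: "acceptable Ev b C u" and e: "e \<in> Ev" "\<not> interesting Ev b C u e"
    and k: "u e < k" "k \<le> int (b e)"
  shows "C (u(e := k)) = u"
proof -
  have u: "inB Ev b u" and Cu: "C u = u" using acc unfolding acceptable_def by auto
  let ?z = "u(e := k)"
  have z: "inB Ev b ?z" using inB_fun_upd[OF u e(1)] inB_nonneg[OF u, of e] k by simp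
  have "C ?z e \<le> u e"
  proof (rule ccontr)
    assume "\<not> C ?z e \<le> u e"
    then have "interesting Ev b C u e"
      unfolding interesting_def using e(1) z k by (intro conjI exI[of _ ?z]) auto
    then show False using e(2) by blast
  qed
  then have "C ?z x \<le> u x" for x using C_le_apply[OF z, of x] by (cases "x = e") auto
  then have "C ?z \<le> u" by (simp add: le_fun_def)
  moreover have "u \<le> ?z" using k by (simp add: le_fun_def)
  ultimately show ?thesis using consistency[OF z u] Cu by simp
qed

lemma C_eq_if_excess_uninteresting:
  assumes acc: "acceptable Ev b C u" and T: "inB Ev b T" "u \<le> T"
    and excess: "\<And>e. u e < T e \<Longrightarrow> \<not> interesting Ev b C u e"
  shows "C T = u"
proof -
  have u: "inB Ev b u" and Cu: "C u = u" using acc unfolding acceptable_def by auto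
  have "C T e \<le> u e" for e
  proof (cases "u e < T e")
    case True
    then have e: "e \<in> Ev" using inB_outside[OF u] inB_outside[OF T(1)] by force
    let ?z = "u(e := T e)"
    have "C ?z = u"
      using C_fun_upd_uninteresting[OF acc e excess[OF True] True inB_le_cap[OF T(1)]] .
    moreover have "min (C T e) (?z e) \<le> C ?z e"
    proof (rule substitutability[OF T(1)])
      show "inB Ev b ?z" using inB_fun_upd[OF u e] inB_nonneg[OF T(1)] inB_le_cap[OF T(1)] by simp
      show "?z \<le> T" using T(2) by (simp add: le_fun_def)
    qed
    ultimately have "min (C T e) (T e) \<le> u e" by simp
    then show ?thesis using C_le_apply[OF T(1), of e] by simp
  next
    case False
    then show ?thesis using C_le_apply[OF T(1), of e] by simp
  qed
  then have "C T \<le> u" by (simp add: le_fun_def)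
  then show ?thesis using consistency[OF T(1) u T(2)] Cu by simp
qed

context
  fixes u z :: "'e \<Rightarrow> int"
  assumes acc: "acceptable Ev b C u" and z: "inB Ev b z"
    and excess: "\<And>e. u e < z e \<Longrightarrow> \<not> interesting Ev b C u e"
begin

lemma C_sup_eq_if_excess_uninteresting: "C (sup u z) = u"
proof (rule C_eq_if_excess_uninteresting[OF acc])
  show "inB Ev b (sup u z)" using inB_sup acc z unfolding acceptable_def by blast
  show "\<And>e. u e < sup u z e \<Longrightarrow> \<not> interesting Ev b C u e" using excess by (simp add: sup_max)
qed simp

lemma min_le_C_if_excess_uninteresting: "min (u e) (z e) \<le> C z e"
  using substitutability[of "sup u z" z e] C_sup_eq_if_excess_uninteresting
    inB_sup[of Ev b u z] acc z by (simp add: acceptable_def)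

lemma vnorm_C_le_if_excess_uninteresting: "vnorm Ev (C z) \<le> vnorm Ev u"
  using size_monotonicity[of "sup u z" z] C_sup_eq_if_excess_uninteresting
    inB_sup[of Ev b u z] acc z by (simp add: acceptable_def)

end

lemma interesting_if_lowered:
  assumes acc: "acceptable Ev b C u" and y: "inB Ev b y" and c: "c \<in> Ev" "y c < u c"
    and excess: "\<And>e. e \<noteq> c \<Longrightarrow> u e < y e \<Longrightarrow> \<not> interesting Ev b C u e"
  shows "interesting Ev b C y c"
proof -
  have u: "inB Ev b u" using acc unfolding acceptable_def by simp
  let ?p = "y(c := u c)"
  have p: "inB Ev b ?p" using inB_fun_upd[OF y c(1)] inB_nonneg[OF u] inB_le_cap[OF u] by simp
  have "min (u c) (?p c) \<le> C ?p c"
    by (rule min_le_C_if_excess_uninteresting[OF acc p]) (use excess in \<open>auto split: if_splits\<close>)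
  then show ?thesis
    unfolding interesting_def using c p by (intro conjI exI[of _ ?p]) auto
qed

lemma interesting_if_preferred:
  assumes X: "inB Ev b X" and Y: "inB Ev b Y" and pref: "C (sup X Y) = Y"
    and interesting: "interesting Ev b C Y e"
  shows "interesting Ev b C X e"
proof -
  obtain z where e: "e \<in> Ev" and z: "inB Ev b z" "Y e < z e" "\<forall>x. x \<noteq> e \<longrightarrow> z x = Y x"
    and Cz: "Y e < C z e"
    using interesting unfolding interesting_def by blast
  let ?U = "sup X Y"
  let ?V = "?U(e := max (z e) (?U e))"
  have U: "inB Ev b ?U" using inB_sup[OF X Y] .
  have V: "inB Ev b ?V"
    using inB_fun_upd[OF U e] inB_nonneg[OF U, of e] inB_le_cap[OF U, of e] inB_le_cap[OF z(1), of e]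
    by simp
  have UV: "?U \<le> ?V" by (simp add: le_fun_def sup_max le_max_iff_disj)
  have CV: "Y e < C ?V e"
  proof (rule ccontr)
    assume "\<not> Y e < C ?V e"
    then have "C ?V x \<le> ?U x" for x
      using C_le_apply[OF V, of x] by (cases "x = e") (auto simp: sup_max)
    then have "C ?V = Y" using consistency[OF V U UV] pref by (simp add: le_fun_def)
    moreover have "z x \<le> ?V x" for x using z(3) by (cases "x = e") (auto simp: sup_max)
    then have "z \<le> ?V" by (simp add: le_fun_def)
    moreover have "Y x \<le> z x" for x using z(2,3) by (cases "x = e") auto
    then have "Y \<le> z" by (simp add: le_fun_def)
    ultimately have "C z = Y" using consistency[OF V z(1)] by simp
    then show False using Cz by simp
  qed
  have Xe: "X e \<le> Y e"
    using substitutability[OF V U UV, of e] pref CV by (simp add: sup_max)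
  let ?x = "X(e := ?V e)"
  have x: "inB Ev b ?x" using inB_fun_upd[OF X e] inB_nonneg[OF V, of e] inB_le_cap[OF V, of e] by simp
  have "min (C ?V e) (?x e) \<le> C ?x e"
    by (rule substitutability[OF V x]) (simp add: le_fun_def sup_max)
  then have "Y e < C ?x e" using CV C_le_apply[OF V, of e] by simp
  moreover have "Y e < ?x e" using z(2) by simp
  ultimately show ?thesis
    unfolding interesting_def using e x Xe by (intro conjI exI[of _ ?x]) auto
qed

lemma C_add_indicator_if_pairs:
  assumes acc: "acceptable Ev b C X"
    and A: "A = as ` J" "inj_on as J" "A \<subseteq> Ev" and B: "B = cs ` J" "inj_on cs J" "B \<subseteq> Ev"
    and disjoint: "A \<inter> B = {}"
    and pairs: "\<And>j. j \<in> J \<Longrightarrow> C (X + unitv (as j)) = X + unitv (as j) - unitv (cs j)"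
    and Y: "inB Ev b (X + indicator A - indicator B)"
  shows "C (X + indicator A) = X + indicator A - indicator B"
proof -
  let ?T = "X + indicator A" and ?Y = "X + indicator A - indicator B"
  have X: "inB Ev b X" and CX: "C X = X" using acc unfolding acceptable_def by auto
  have "?T = sup X ?Y" using disjoint by (auto simp: fun_eq_iff sup_max split: split_indicator)
  then have T: "inB Ev b ?T" using inB_sup[OF X Y] by simp
  have "C ?T e \<le> ?Y e" for e
  proof (cases "e \<in> B")
    case True
    then obtain j where j: "j \<in> J" "e = cs j" using B by blast
    have "as j \<in> A" "e \<notin> A" "e \<noteq> as j" using A j True disjoint by auto
    let ?u = "X + unitv (as j)"
    have "min (C ?T e) (?u e) \<le> C ?u e"
    proof (rule substitutability[OF T])
      show "?u \<le> ?T" using \<open>as j \<in> A\<close> by (simp add: le_fun_def unitv_def)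
      then show "inB Ev b ?u" using inB_below[OF T] inB_nonneg[OF X] by (simp add: unitv_def)
    qed
    then have "min (C ?T e) (X e) \<le> X e - 1"
      using pairs[OF j(1)] j \<open>e \<notin> A\<close> \<open>e \<noteq> as j\<close> by (simp add: unitv_def)
    then show ?thesis using C_le_apply[OF T, of e] True \<open>e \<notin> A\<close> by simp
  next
    case False
    then show ?thesis using C_le_apply[OF T, of e] by simp
  qed
  then have "C ?T \<le> ?Y" by (simp add: le_fun_def)
  moreover have "vnorm Ev ?Y \<le> vnorm Ev (C ?T)"
  proof -
    have "vnorm Ev ?Y = vnorm Ev (C X)"
      using vnorm_exchange[OF X Y A(3) B(3)] card_image[OF A(2)] card_image[OF B(2)] A(1) B(1) CX
      by simp
    also have "\<dots> \<le> vnorm Ev (C ?T)" using size_monotonicity[OF T X] by (simp add: le_fun_def)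
    finally show ?thesis .
  qed
  ultimately show ?thesis using eq_if_le_vnorm_le[OF C_inB[OF T] Y] by simp
qed

text \<open>Exchange at a vertex \<open>w\<close>: the pairs \<open>(cs j, as j)\<close> for \<open>j \<in> J\<close> are essential
  \<open>w\<close>-pairs of a rotation, \<open>D\<close> plays the role of \<open>U\<^sub>F\<^sup>+(x) \<inter> E\<^sub>w\<close>, and
  \<open>Z + indicator A - indicator B\<close> is the new assignment at \<open>w\<close>.\<close>

context
  fixes Z :: "'e \<Rightarrow> int" and J :: "'j set" and as cs :: "'j \<Rightarrow> 'e" and A B D :: "'e set"
  assumes acc: "acceptable Ev b C Z"
    and A: "A = as ` J" and B: "B = cs ` J" and AD: "A \<subseteq> D" and DEv: "D \<subseteq> Ev" and BEv: "B \<subseteq> Ev"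
    and DB: "D \<inter> B = {}"
    and uninteresting: "\<And>d. d \<in> D \<Longrightarrow> \<not> interesting Ev b C Z d"
    and acc_pairs: "\<And>j. j \<in> J \<Longrightarrow> acceptable Ev b C (Z + unitv (as j) - unitv (cs j))"
    and essential: "\<And>j d. j \<in> J \<Longrightarrow> d \<in> D - {as j} \<Longrightarrow>
      \<not> interesting Ev b C (Z + unitv (as j) - unitv (cs j)) d"
    and Y: "inB Ev b (Z + indicator A - indicator B)"
begin

lemma excess_over_Z_uninteresting:
  assumes near: "\<And>y. z y \<noteq> (Z + indicator A - indicator B) y \<Longrightarrow> y = e \<and> e \<in> D"
    and excess: "Z y < z y"
  shows "\<not> interesting Ev b C Z y"
proof -
  have "y \<in> D"
  proof (cases "z y = (Z + indicator A - indicator B) y")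
    case True
    then have "y \<in> A" using excess by (cases "y \<in> A"; cases "y \<in> B") auto
    then show ?thesis using AD by blast
  qed (use near in blast)
  then show ?thesis using uninteresting by blast
qed

lemma le_C_near_exchange:
  assumes z: "inB Ev b z"
    and near: "\<And>y. z y \<noteq> (Z + indicator A - indicator B) y \<Longrightarrow> y = e \<and> e \<in> D"
    and x: "z x = (Z + indicator A - indicator B) x"
  shows "(Z + indicator A - indicator B) x \<le> C z x"
proof (cases "x \<in> A")
  case True
  then obtain j where j: "j \<in> J" "x = as j" using A by blast
  have AB: "as j \<in> A" "as j \<notin> B" "cs j \<in> B" "cs j \<notin> A" "cs j \<noteq> as j"
    using A B j AD DB by auto
  let ?u = "Z + unitv (as j) - unitv (cs j)"
  have "min (?u x) (z x) \<le> C z x"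
  proof (rule min_le_C_if_excess_uninteresting[OF acc_pairs[OF j(1)] z])
    fix y assume excess: "?u y < z y"
    have "y \<in> D - {as j}"
    proof (cases "z y = (Z + indicator A - indicator B) y")
      case True
      then have "y \<in> A - {as j}"
        using excess AB by (cases "y \<in> A"; cases "y \<in> B") (auto simp: unitv_def split: if_splits)
      then show ?thesis using AD by blast
    next
      case False
      then show ?thesis using near x j by auto
    qed
    then show "\<not> interesting Ev b C ?u y" using essential[OF j(1)] by blast
  qed
  then show ?thesis using x j AB by (auto simp: unitv_def)
next
  case False
  have "min (Z x) (z x) \<le> C z x"
    by (rule min_le_C_if_excess_uninteresting[OF acc z excess_over_Z_uninteresting[OF near]])
  then show ?thesis using x False by (cases "x \<in> B") auto
qed

lemma acceptable_exchange: "acceptable Ev b C (Z + indicator A - indicator B)"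
proof -
  have "Z + indicator A - indicator B \<le> C (Z + indicator A - indicator B)"
    using le_C_near_exchange[OF Y] by (simp add: le_fun_def)
  then show ?thesis using C_le[OF Y] Y unfolding acceptable_def by (simp add: antisym)
qed

lemma not_interesting_exchange:
  assumes inj: "inj_on as J" "inj_on cs J" and e: "e \<in> D"
  shows "\<not> interesting Ev b C (Z + indicator A - indicator B) e"
proof
  let ?Y = "Z + indicator A - indicator B"
  assume "interesting Ev b C ?Y e"
  then obtain z where z: "inB Ev b z" "\<forall>y. y \<noteq> e \<longrightarrow> z y = ?Y y" and Ce: "?Y e < C z e"
    unfolding interesting_def by blast
  have near: "\<And>y. z y \<noteq> ?Y y \<Longrightarrow> y = e \<and> e \<in> D" using z(2) e by blast
  have "?Y x \<le> C z x" for x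
    using le_C_near_exchange[OF z(1) near] z(2) Ce by (cases "x = e") auto
  then have "?Y \<le> C z" by (simp add: le_fun_def)
  then have "vnorm Ev ?Y < vnorm Ev (C z)"
    using vnorm_less[OF Y C_inB[OF z(1)] _ _ Ce] e DEv by blast
  also have "\<dots> \<le> vnorm Ev Z"
    by (rule vnorm_C_le_if_excess_uninteresting[OF acc z(1) excess_over_Z_uninteresting[OF near]])
  also have "\<dots> = vnorm Ev ?Y"
  proof -
    have "card A = card B" using card_image[OF inj(1)] card_image[OF inj(2)] A B by simp
    then show ?thesis using vnorm_exchange[OF _ Y] acc AD DEv BEv by (simp add: acceptable_def)
  qed
  finally show False by simp
qed

end

end

section \<open>Rotations as lists of edges\<close>

definition a_edges :: "'a list \<Rightarrow> 'a set" where
  "a_edges R = {R ! j | j. j < length R \<and> even j}"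

definition c_edges :: "'a list \<Rightarrow> 'a set" where
  "c_edges R = {R ! j | j. j < length R \<and> odd j}"

lemma a_c_edges_disjoint: "distinct R \<Longrightarrow> a_edges R \<inter> c_edges R = {}"
  unfolding a_edges_def c_edges_def by (auto simp: nth_eq_iff_index_eq)

lemma chi_eq_indicator:
  assumes "distinct R"
  shows "chi R e = indicator (a_edges R) e - indicator (c_edges R) e"
proof (cases "e \<in> set R")
  case True
  then obtain k where k: "k < length R" "R ! k = e" by (metis in_set_conv_nth)
  have iff: "j < length R \<Longrightarrow> R ! j = e \<longleftrightarrow> j = k" for j
    using assms k by (auto simp: nth_eq_iff_index_eq)
  have "chi R e = (\<Sum>j<length R. if j = k then (if even k then 1 else -1) else 0)"
    unfolding chi_def by (intro sum.cong) (auto simp: iff)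
  also have "\<dots> = (if even k then 1 else -1)" using k by simp
  finally have "chi R e = (if even k then 1 else -1)" .
  moreover have "e \<in> a_edges R \<longleftrightarrow> even k" "e \<in> c_edges R \<longleftrightarrow> odd k"
    unfolding a_edges_def c_edges_def using iff k by auto
  ultimately show ?thesis by simp
next
  case False
  then have "chi R e = 0" unfolding chi_def by (auto intro!: sum.neutral)
  moreover have "e \<notin> a_edges R" "e \<notin> c_edges R"
    using False unfolding a_edges_def c_edges_def by auto
  ultimately show ?thesis by simp
qed

lemma length_concat_map_pairs:
  "(\<And>j. length (h j) = 2) \<Longrightarrow> length (concat (map h [0..<n])) = 2 * n"
  by (induction n) auto

lemma nth_concat_map_pairs:
  assumes "\<And>j. length (h j) = 2" "i < 2 * n"
  shows "concat (map h [0..<n]) ! i = h (i div 2) ! (i mod 2)"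
  using assms(2)
proof (induction n)
  case (Suc n)
  have len: "length (concat (map h [0..<n])) = 2 * n"
    using length_concat_map_pairs assms(1) .
  show ?case
  proof (cases "i < 2 * n")
    case True
    then show ?thesis using Suc.IH len by (simp add: nth_append)
  next
    case False
    then have "i div 2 = n" "i mod 2 = i - 2 * n" using Suc.prems by presburger+
    then show ?thesis using False len by (simp add: nth_append)
  qed
qed simp

lemma length_cycle_verts: "length (cycle_verts R) = 2 * length R"
  unfolding cycle_verts_def by (rule length_concat_map_pairs) simp

lemma nth_cycle_verts:
  "i < 2 * length R \<Longrightarrow> cycle_verts R ! i = (R ! (i div 2), even (i div 2) \<longleftrightarrow> even i)"
  unfolding cycle_verts_def by (subst nth_concat_map_pairs) (auto simp: mod2_eq_if)

lemma darcs_cases: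
  assumes "((a, p), (c, q)) \<in> darcs E b Cw Cf x"
  shows "p \<Longrightarrow> \<not> q \<Longrightarrow> a \<in> Uplus E b Cf x"
    and "\<not> p \<Longrightarrow> q \<Longrightarrow> a \<in> Uminus E b Cf x"
    and "\<not> p \<Longrightarrow> \<not> q \<Longrightarrow> legal_fpair E b Cf x a c"
    and "p \<Longrightarrow> q \<Longrightarrow> essential_wpair E b Cw Cf x a c"
  using assms unfolding darcs_def by auto

section \<open>Stable g-matchings\<close>

lemma Uplus_Uminus_disjoint: "Uplus E b Cf x \<inter> Uminus E b Cf x = {}"
  unfolding Uplus_def Uminus_def by auto

lemma Uplus_less_cap:
  assumes "e \<in> Uplus E b Cf x"
  shows "x e < int (b e)"
proof -
  obtain z where "inB (Ef E (snd e)) b z" "restr (Ef E (snd e)) x e < z e" "e \<in> Ef E (snd e)"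
    using assms unfolding Uplus_def interesting_def by blast
  then show ?thesis using inB_le_cap[of "Ef E (snd e)" b z e] by (simp add: restr_def)
qed

lemma Uminus_pos: "e \<in> Uminus E b Cf x \<Longrightarrow> 0 < x e"
  unfolding Uminus_def by simp

locale choice_graph =
  fixes W :: "'w set" and F :: "'f set" and E :: "('w \<times> 'f) set"
    and b :: "'w \<times> 'f \<Rightarrow> nat"
    and Cw :: "'w \<Rightarrow> ('w, 'f) cfun" and Cf :: "'f \<Rightarrow> ('w, 'f) cfun"
  assumes finite_W: "finite W" and finite_F: "finite F" and E_subset: "E \<subseteq> W \<times> F"
    and choice_fun_W: "\<forall>w\<in>W. choice_fun (Ew E w) b (Cw w)"
    and choice_fun_F: "\<forall>f\<in>F. choice_fun (Ef E f) b (Cf f)"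
begin

lemma finite_E: "finite E"
  using finite_W finite_F E_subset by (meson finite_SigmaI finite_subset)

lemma choice_function_W: "w \<in> W \<Longrightarrow> choice_function (Ew E w) b (Cw w)"
  using choice_fun_W finite_E by unfold_locales (auto simp: Ew_def)

lemma choice_function_F: "f \<in> F \<Longrightarrow> choice_function (Ef E f) b (Cf f)"
  using choice_fun_F finite_E by unfold_locales (auto simp: Ef_def)

lemma fst_in_W: "e \<in> E \<Longrightarrow> fst e \<in> W" and snd_in_F: "e \<in> E \<Longrightarrow> snd e \<in> F"
  using E_subset by auto

lemma stable_acceptable_W:
  "stable W F E b Cw Cf x \<Longrightarrow> w \<in> W \<Longrightarrow> acceptable (Ew E w) b (Cw w) (restr (Ew E w) x)"
  and stable_acceptable_F:
  "stable W F E b Cw Cf x \<Longrightarrow> f \<in> F \<Longrightarrow> acceptable (Ef E f) b (Cf f) (restr (Ef E f) x)"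
  and stable_bounds:
  "stable W F E b Cw Cf x \<Longrightarrow> e \<in> E \<Longrightarrow> 0 \<le> x e \<and> x e \<le> int (b e)"
  and stable_outside:
  "stable W F E b Cw Cf x \<Longrightarrow> e \<notin> E \<Longrightarrow> x e = 0"
  unfolding stable_def gmatching_def by blast+

lemma stable_Uplus_not_interesting_W:
  assumes "stable W F E b Cw Cf x" "e \<in> Uplus E b Cf x"
  shows "\<not> interesting (Ew E (fst e)) b (Cw (fst e)) (restr (Ew E (fst e)) x) e"
  using assms unfolding stable_def blocking_def Uplus_def by blast

lemma Uplus_subset_if_preferred_F:
  assumes "\<And>f. f \<in> F \<Longrightarrow> inB (Ef E f) b (restr (Ef E f) x)"
    and "\<And>f. f \<in> F \<Longrightarrow> inB (Ef E f) b (restr (Ef E f) y)"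
    and "\<And>f. f \<in> F \<Longrightarrow> Cf f (sup (restr (Ef E f) x) (restr (Ef E f) y)) = restr (Ef E f) y"
  shows "Uplus E b Cf y \<subseteq> Uplus E b Cf x"
  using choice_function.interesting_if_preferred[OF choice_function_F] assms snd_in_F
  unfolding Uplus_def by blast

end

section \<open>Applying one rotation\<close>

locale rotation_at = choice_graph +
  fixes x :: "('w, 'f) vec" and R :: "('w \<times> 'f) list"
  assumes rotation: "rotation W F E b Cw Cf x R"
begin

lemma x_stable: "stable W F E b Cw Cf x"
  and R_distinct: "distinct R" and even_length: "even (length R)" and R_nonempty: "R \<noteq> []"
  using rotation unfolding rotation_def by auto

lemma arc:
  assumes "i < 2 * length R"
  shows "(cycle_verts R ! i, cycle_verts R ! (Suc i mod (2 * length R))) \<in> darcs E b Cw Cf x"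
  using rotation assms length_cycle_verts[of R] unfolding rotation_def Let_def by simp

lemma arc_from_edge:
  assumes "j < length R"
  shows "((R ! j, even j), (R ! j, odd j)) \<in> darcs E b Cw Cf x"
proof -
  have "Suc (2 * j) mod (2 * length R) = Suc (2 * j)" using assms by simp
  then show ?thesis using arc[of "2 * j"] assms by (simp add: nth_cycle_verts)
qed

lemma arc_to_next_edge:
  assumes "j < length R"
  shows "((R ! j, odd j), (R ! (Suc j mod length R), even (Suc j mod length R)))
    \<in> darcs E b Cw Cf x"
proof -
  have "Suc (Suc (2 * j)) mod (2 * length R) = 2 * (Suc j mod length R)"
    by (simp add: mult_mod_right)
  moreover have "Suc j mod length R < length R" using R_nonempty by simp
  ultimately show ?thesis using arc[of "Suc (2 * j)"] assms by (simp add: nth_cycle_verts)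
qed

lemma Suc_less_length: "j < length R \<Longrightarrow> even j \<Longrightarrow> Suc j < length R"
  using even_length by (metis Suc_lessI even_Suc)

lemma even_Suc_mod_length:
  assumes "j < length R"
  shows "even (Suc j mod length R) \<longleftrightarrow> odd j"
proof (cases "Suc j = length R")
  case True
  then have "Suc j mod length R = 0" "odd j" using even_length by (simp_all flip: True)
  then show ?thesis by simp
next
  case False
  then show ?thesis using assms by simp
qed

lemma a_edge_Uplus: "j < length R \<Longrightarrow> even j \<Longrightarrow> R ! j \<in> Uplus E b Cf x"
  using darcs_cases(1)[OF arc_from_edge] by simp

lemma c_edge_Uminus: "j < length R \<Longrightarrow> odd j \<Longrightarrow> R ! j \<in> Uminus E b Cf x"
  using darcs_cases(2)[OF arc_from_edge] by simp

lemma a_edges_Uplus: "a_edges R \<subseteq> Uplus E b Cf x"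
  unfolding a_edges_def using a_edge_Uplus by blast

lemma c_edges_Uminus: "c_edges R \<subseteq> Uminus E b Cf x"
  unfolding c_edges_def using c_edge_Uminus by blast

lemma a_edges_subset: "a_edges R \<subseteq> E" and c_edges_subset: "c_edges R \<subseteq> E"
  using a_edges_Uplus c_edges_Uminus unfolding Uplus_def Uminus_def by auto

lemma a_c_disjoint: "a_edges R \<inter> c_edges R = {}"
  using a_c_edges_disjoint[OF R_distinct] .

text \<open>The c-edges at \<open>f\<close> and at \<open>w\<close> are indexed by their (odd) positions in \<open>R\<close>; the partner
  of \<open>R ! j\<close> is \<open>R ! (j - 1)\<close> in its legal f-pair and \<open>R ! (Suc j mod length R)\<close> in its
  essential w-pair.\<close>

definition c_index_F :: "'f \<Rightarrow> nat set" where
  "c_index_F f = {j. j < length R \<and> odd j \<and> R ! j \<in> Ef E f}"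

definition c_index_W :: "'w \<Rightarrow> nat set" where
  "c_index_W w = {j. j < length R \<and> odd j \<and> R ! j \<in> Ew E w}"

lemma c_edges_at_F: "c_edges R \<inter> Ef E f = (!) R ` c_index_F f"
  unfolding c_edges_def c_index_F_def by auto

lemma c_edges_at_W: "c_edges R \<inter> Ew E w = (!) R ` c_index_W w"
  unfolding c_edges_def c_index_W_def by auto

lemma inj_on_c_index_F: "inj_on ((!) R) (c_index_F f)"
  using R_distinct unfolding c_index_F_def by (intro inj_on_nth) auto

lemma inj_on_c_index_W: "inj_on ((!) R) (c_index_W w)"
  using R_distinct unfolding c_index_W_def by (intro inj_on_nth) auto

lemma legal_fpair_parts:
  assumes "j < length R" "even j"
  shows "snd (R ! Suc j) = snd (R ! j)" "R ! Suc j \<in> E"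
    and "Cf (snd (R ! j)) (restr (Ef E (snd (R ! j))) x + unitv (R ! j))
      = restr (Ef E (snd (R ! j))) x + unitv (R ! j) - unitv (R ! Suc j)"
  using darcs_cases(3)[OF arc_to_next_edge[OF assms(1)]] even_Suc_mod_length[OF assms(1)] assms(2)
    Suc_less_length[OF assms]
  unfolding legal_fpair_def Let_def Ef_def by auto

lemma essential_wpair_parts:
  assumes "j < length R" "odd j"
  defines "a \<equiv> R ! (Suc j mod length R)" and "w \<equiv> fst (R ! j)"
  shows "fst a = w" "R ! j \<in> E"
    and "acceptable (Ew E w) b (Cw w) (restr (Ew E w) x + unitv a - unitv (R ! j))"
    and "\<And>d. d \<in> Uplus E b Cf x \<inter> Ew E w - {a} \<Longrightarrow>
      \<not> interesting (Ew E w) b (Cw w) (restr (Ew E w) x + unitv a - unitv (R ! j)) d"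
  using darcs_cases(4)[OF arc_to_next_edge[OF assms(1)]] even_Suc_mod_length[OF assms(1)] assms(2)
  unfolding essential_wpair_def legal_wpair_def Let_def Ew_def a_def w_def by auto

lemma a_edges_at_F: "a_edges R \<inter> Ef E f = (\<lambda>j. R ! (j - 1)) ` c_index_F f"
proof (intro equalityI subsetI)
  fix e assume "e \<in> a_edges R \<inter> Ef E f"
  then obtain i where i: "i < length R" "even i" "e = R ! i" "e \<in> Ef E f"
    unfolding a_edges_def by auto
  have "Suc i < length R" using Suc_less_length[OF i(1,2)] .
  moreover have "R ! Suc i \<in> Ef E f" using legal_fpair_parts(1,2)[OF i(1,2)] i(3,4) by (auto simp: Ef_def)
  ultimately have "Suc i \<in> c_index_F f" using i unfolding c_index_F_def by simp
  then show "e \<in> (\<lambda>j. R ! (j - 1)) ` c_index_F f" using i(3) by force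
next
  fix e assume "e \<in> (\<lambda>j. R ! (j - 1)) ` c_index_F f"
  then obtain j where j: "j < length R" "odd j" "R ! j \<in> Ef E f" "e = R ! (j - 1)"
    unfolding c_index_F_def by auto
  define i where "i = j - 1"
  have "0 < j" using j(2) by (rule odd_pos)
  then have i: "j = Suc i" "even i" "i < length R" using j(1,2) unfolding i_def by auto
  then have "R ! i \<in> a_edges R" unfolding a_edges_def by auto
  moreover have "snd (R ! i) = f"
    using legal_fpair_parts(1)[OF i(3,2)] i(1) j(3) by (simp add: Ef_def)
  ultimately show "e \<in> a_edges R \<inter> Ef E f" using a_edges_subset i j(4) by (auto simp: Ef_def)
qed

lemma a_edges_at_W: "a_edges R \<inter> Ew E w = (\<lambda>j. R ! (Suc j mod length R)) ` c_index_W w"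
proof (intro equalityI subsetI)
  fix e assume "e \<in> a_edges R \<inter> Ew E w"
  then obtain i where i: "i < length R" "even i" "e = R ! i" "e \<in> Ew E w"
    unfolding a_edges_def by auto
  define j where "j = (if i = 0 then length R - 1 else i - 1)"
  have j: "j < length R" "Suc j mod length R = i" using i R_nonempty unfolding j_def by auto
  then have "odd j" using even_Suc_mod_length i(2) by blast
  then have "R ! j \<in> Ew E w" using essential_wpair_parts(1,2)[OF j(1)] i j(2) by (auto simp: Ew_def)
  then have "j \<in> c_index_W w" using j(1) \<open>odd j\<close> unfolding c_index_W_def by simp
  then show "e \<in> (\<lambda>j. R ! (Suc j mod length R)) ` c_index_W w" using i(3) j(2) by force
next
  fix e assume "e \<in> (\<lambda>j. R ! (Suc j mod length R)) ` c_index_W w"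
  then obtain j where j: "j < length R" "odd j" "R ! j \<in> Ew E w" "e = R ! (Suc j mod length R)"
    unfolding c_index_W_def by auto
  have "Suc j mod length R < length R" using R_nonempty by simp
  then have "e \<in> a_edges R"
    using even_Suc_mod_length[OF j(1)] j(2,4) unfolding a_edges_def by auto
  moreover have "fst e = w" using essential_wpair_parts(1)[OF j(1,2)] j(3,4) by (simp add: Ew_def)
  ultimately show "e \<in> a_edges R \<inter> Ew E w" using a_edges_subset by (auto simp: Ew_def)
qed

lemma inj_on_pred_c_index_F: "inj_on (\<lambda>j. R ! (j - 1)) (c_index_F f)"
proof (rule inj_onI)
  fix j k assume jk: "j \<in> c_index_F f" "k \<in> c_index_F f" "R ! (j - 1) = R ! (k - 1)"
  then have "j - 1 = k - 1" using R_distinct unfolding c_index_F_def by (auto simp: nth_eq_iff_index_eq)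
  moreover have "0 < j" "0 < k" using jk unfolding c_index_F_def by (auto intro: odd_pos)
  ultimately show "j = k" by simp
qed

lemma inj_on_succ_c_index_W: "inj_on (\<lambda>j. R ! (Suc j mod length R)) (c_index_W w)"
proof (rule inj_onI)
  fix j k assume jk: "j \<in> c_index_W w" "k \<in> c_index_W w"
    "R ! (Suc j mod length R) = R ! (Suc k mod length R)"
  then have "Suc j mod length R = Suc k mod length R"
    using R_distinct R_nonempty by (simp add: nth_eq_iff_index_eq)
  moreover have "j < length R" "k < length R" using jk unfolding c_index_W_def by auto
  ultimately show "j = k"
    by (cases "Suc j = length R"; cases "Suc k = length R") auto
qed

lemma legal_pair_at_F:
  assumes "j \<in> c_index_F f"
  shows "Cf f (restr (Ef E f) x + unitv (R ! (j - 1)))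
    = restr (Ef E f) x + unitv (R ! (j - 1)) - unitv (R ! j)"
proof -
  have j: "j < length R" "odd j" "R ! j \<in> Ef E f" using assms unfolding c_index_F_def by auto
  then have "0 < j" by (simp add: odd_pos)
  then have i: "j - 1 < length R" "even (j - 1)" "Suc (j - 1) = j" using j by auto
  then have "snd (R ! (j - 1)) = f" using legal_fpair_parts(1)[OF i(1,2)] j(3) by (simp add: Ef_def)
  then show ?thesis using legal_fpair_parts(3)[OF i(1,2)] i(3) by simp
qed

lemma essential_pair_at_W:
  assumes "j \<in> c_index_W w"
  defines "u \<equiv> restr (Ew E w) x + unitv (R ! (Suc j mod length R)) - unitv (R ! j)"
  shows "acceptable (Ew E w) b (Cw w) u"
    and "\<And>d. d \<in> Uplus E b Cf x \<inter> Ew E w - {R ! (Suc j mod length R)} \<Longrightarrow>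
      \<not> interesting (Ew E w) b (Cw w) u d"
proof -
  have j: "j < length R" "odd j" "fst (R ! j) = w" using assms unfolding c_index_W_def Ew_def by auto
  show "acceptable (Ew E w) b (Cw w) u"
    using essential_wpair_parts(3)[OF j(1,2)] j(3) unfolding u_def by simp
  show "\<And>d. d \<in> Uplus E b Cf x \<inter> Ew E w - {R ! (Suc j mod length R)} \<Longrightarrow>
      \<not> interesting (Ew E w) b (Cw w) u d"
    using essential_wpair_parts(4)[OF j(1,2)] j(3) unfolding u_def by simp
qed

end

context rotation_at
begin

definition advance :: "nat \<Rightarrow> ('w, 'f) vec" where
  "advance t = (\<lambda>e. x e + int t * chi R e)"

lemma advance_apply:
  "advance t e = x e + (if e \<in> a_edges R then int t else if e \<in> c_edges R then - int t else 0)"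
  using a_c_disjoint by (auto simp: advance_def chi_eq_indicator[OF R_distinct] split: split_indicator)

lemma restr_advance_cases:
  "restr Ev (advance t) e =
    (if e \<in> Ev \<and> e \<in> a_edges R then restr Ev x e + int t
     else if e \<in> Ev \<and> e \<in> c_edges R then restr Ev x e - int t else restr Ev x e)"
  by (simp add: restr_def advance_apply)

lemma restr_advance_1:
  "restr Ev (advance 1) = restr Ev x + indicator (a_edges R \<inter> Ev) - indicator (c_edges R \<inter> Ev)"
  using a_c_disjoint by (auto simp: fun_eq_iff restr_def advance_apply split: split_indicator)

lemma advance_1_bounds:
  assumes "e \<in> E"
  shows "0 \<le> advance 1 e \<and> advance 1 e \<le> int (b e)"
proof -
  have "e \<in> a_edges R \<Longrightarrow> x e < int (b e)" using a_edges_Uplus Uplus_less_cap by blast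
  moreover have "e \<in> c_edges R \<Longrightarrow> 0 < x e" using c_edges_Uminus Uminus_pos by blast
  ultimately show ?thesis using stable_bounds[OF x_stable assms] by (auto simp: advance_apply)
qed

lemma advance_outside: "e \<notin> E \<Longrightarrow> advance t e = 0"
  using stable_outside[OF x_stable] a_edges_subset c_edges_subset by (auto simp: advance_apply)

lemma inB_restr_advance_1: "Ev \<subseteq> E \<Longrightarrow> inB Ev b (restr Ev (advance 1))"
  using advance_1_bounds by (intro inB_restr) auto

lemma advance_1_chosen_F:
  assumes f: "f \<in> F"
  shows "Cf f (sup (restr (Ef E f) x) (restr (Ef E f) (advance 1))) = restr (Ef E f) (advance 1)"
proof -
  interpret choice_function "Ef E f" b "Cf f" using choice_function_F[OF f] .
  let ?X = "restr (Ef E f) x" and ?A = "a_edges R \<inter> Ef E f" and ?B = "c_edges R \<inter> Ef E f"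
  have "sup ?X (restr (Ef E f) (advance 1)) = ?X + indicator ?A"
    unfolding restr_advance_1 using a_c_disjoint by (auto simp: fun_eq_iff sup_max split: split_indicator)
  moreover have "Cf f (?X + indicator ?A) = ?X + indicator ?A - indicator ?B"
  proof (rule C_add_indicator_if_pairs[OF stable_acceptable_F[OF x_stable f] a_edges_at_F
        inj_on_pred_c_index_F _ c_edges_at_F inj_on_c_index_F])
    show "Cf f (?X + unitv (R ! (j - 1))) = ?X + unitv (R ! (j - 1)) - unitv (R ! j)"
      if "j \<in> c_index_F f" for j
      using legal_pair_at_F[OF that] .
    show "inB (Ef E f) b (?X + indicator ?A - indicator ?B)"
      using inB_restr_advance_1[of "Ef E f"] unfolding restr_advance_1 by (simp add: Ef_def)
  qed (use a_c_disjoint in auto)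
  ultimately show ?thesis unfolding restr_advance_1 by simp
qed

lemma advance_1_W:
  assumes w: "w \<in> W"
  shows "acceptable (Ew E w) b (Cw w) (restr (Ew E w) (advance 1))"
    and "\<And>e. e \<in> Uplus E b Cf x \<inter> Ew E w \<Longrightarrow>
      \<not> interesting (Ew E w) b (Cw w) (restr (Ew E w) (advance 1)) e"
proof -
  interpret choice_function "Ew E w" b "Cw w" using choice_function_W[OF w] .
  let ?Z = "restr (Ew E w) x" and ?D = "Uplus E b Cf x \<inter> Ew E w"
  have AD: "a_edges R \<inter> Ew E w \<subseteq> ?D" using a_edges_Uplus by blast
  have DB: "?D \<inter> (c_edges R \<inter> Ew E w) = {}"
    using c_edges_Uminus Uplus_Uminus_disjoint[of E b Cf x] by blast
  have uninteresting: "\<not> interesting (Ew E w) b (Cw w) ?Z d" if "d \<in> ?D" for d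
    using stable_Uplus_not_interesting_W[OF x_stable, of d] that by (auto simp: Ew_def)
  have Y: "inB (Ew E w) b (?Z + indicator (a_edges R \<inter> Ew E w) - indicator (c_edges R \<inter> Ew E w))"
    using inB_restr_advance_1[of "Ew E w"] unfolding restr_advance_1 by (simp add: Ew_def)
  note hyps = stable_acceptable_W[OF x_stable w] a_edges_at_W c_edges_at_W AD Int_lower2 Int_lower2 DB
    uninteresting essential_pair_at_W Y
  show "acceptable (Ew E w) b (Cw w) (restr (Ew E w) (advance 1))"
    unfolding restr_advance_1 by (rule acceptable_exchange[OF hyps])
  show "\<not> interesting (Ew E w) b (Cw w) (restr (Ew E w) (advance 1)) e" if "e \<in> ?D" for e
    unfolding restr_advance_1
    by (rule not_interesting_exchange[OF hyps inj_on_succ_c_index_W inj_on_c_index_W that])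
qed

lemma stable_advance_1: "stable W F E b Cw Cf (advance 1)"
proof -
  have acceptable_F: "acceptable (Ef E f) b (Cf f) (restr (Ef E f) (advance 1))" if f: "f \<in> F" for f
  proof (rule choice_function.acceptable_if_chosen[OF choice_function_F[OF f] _ advance_1_chosen_F[OF f]])
    show "inB (Ef E f) b (sup (restr (Ef E f) x) (restr (Ef E f) (advance 1)))"
      using stable_acceptable_F[OF x_stable f] inB_restr_advance_1[of "Ef E f"]
      by (intro inB_sup) (auto simp: acceptable_def Ef_def)
  qed
  have Uplus: "Uplus E b Cf (advance 1) \<subseteq> Uplus E b Cf x"
    using stable_acceptable_F[OF x_stable] acceptable_F advance_1_chosen_F
    by (intro Uplus_subset_if_preferred_F) (auto simp: acceptable_def)
  have "\<not> blocking E b Cw Cf (advance 1) e" for e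
  proof
    assume "blocking E b Cw Cf (advance 1) e"
    then have e: "e \<in> E" "e \<in> Uplus E b Cf (advance 1)"
      and "interesting (Ew E (fst e)) b (Cw (fst e)) (restr (Ew E (fst e)) (advance 1)) e"
      unfolding blocking_def Uplus_def by blast+
    moreover have "e \<in> Uplus E b Cf x \<inter> Ew E (fst e)" using e Uplus unfolding Ew_def by blast
    ultimately show False using advance_1_W(2)[OF fst_in_W[OF e(1)]] by blast
  qed
  then show ?thesis
    unfolding stable_def gmatching_def
    using advance_1_bounds advance_outside advance_1_W(1) acceptable_F by blast
qed

lemma one_le_tau: "1 \<le> tau W F E b Cw Cf x R"
proof -
  let ?P = "\<lambda>l::nat. \<forall>i\<in>{1..l}. stable W F E b Cw Cf (advance i)"
  let ?c = "R ! 1"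
  have "1 < length R" using R_nonempty even_length by (cases R) auto
  then have c: "?c \<in> c_edges R" "?c \<notin> a_edges R" "?c \<in> E"
    using a_c_disjoint c_edges_subset unfolding c_edges_def by force+
  have "l \<le> nat (x ?c)" if "?P l" for l
  proof (cases "l = 0")
    case False
    then have "stable W F E b Cw Cf (advance l)" using bspec[OF that, of l] by simp
    then have "0 \<le> x ?c - int l" using stable_bounds[of "advance l" ?c] c by (simp add: advance_apply)
    then show ?thesis by linarith
  qed simp
  moreover have "?P 1" using stable_advance_1 by simp
  ultimately have "1 \<le> (GREATEST l. ?P l)" using Greatest_le_nat[of ?P 1 "nat (x ?c)"] by blast
  moreover have "tau W F E b Cw Cf x R = (GREATEST l. ?P l)" by (simp add: tau_def advance_def)
  ultimately show ?thesis by simp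
qed

lemma c_edge_interesting_W:
  assumes t: "1 \<le> t" and stable_t: "stable W F E b Cw Cf (advance t)" and c: "c \<in> c_edges R"
  shows "interesting (Ew E (fst c)) b (Cw (fst c)) (restr (Ew E (fst c)) (advance t)) c"
proof -
  let ?w = "fst c"
  have cE: "c \<in> E" using c c_edges_subset by blast
  interpret choice_function "Ew E ?w" b "Cw ?w" using choice_function_W[OF fst_in_W[OF cE]] .
  show ?thesis
  proof (rule interesting_if_lowered)
    show "acceptable (Ew E ?w) b (Cw ?w) (restr (Ew E ?w) x)"
      using stable_acceptable_W[OF x_stable fst_in_W[OF cE]] .
    show "inB (Ew E ?w) b (restr (Ew E ?w) (advance t))"
      using stable_acceptable_W[OF stable_t fst_in_W[OF cE]] by (simp add: acceptable_def)
    show "c \<in> Ew E ?w" using cE by (simp add: Ew_def)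
    then show "restr (Ew E ?w) (advance t) c < restr (Ew E ?w) x c"
      using c a_c_disjoint t by (auto simp: restr_advance_cases)
  next
    fix e assume "e \<noteq> c" "restr (Ew E ?w) x e < restr (Ew E ?w) (advance t) e"
    then have "e \<in> Uplus E b Cf x" "fst e = ?w"
      using a_edges_Uplus by (auto simp: restr_advance_cases Ew_def split: if_splits)
    then show "\<not> interesting (Ew E ?w) b (Cw ?w) (restr (Ew E ?w) x) e"
      using stable_Uplus_not_interesting_W[OF x_stable, of e] by simp
  qed
qed

lemma Uplus_advance_subset:
  assumes t: "1 \<le> t" and stable_t: "stable W F E b Cw Cf (advance t)"
  shows "Uplus E b Cf (advance t) \<subseteq> Uplus E b Cf x"
proof (rule Uplus_subset_if_preferred_F)
  fix f assume f: "f \<in> F"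
  interpret choice_function "Ef E f" b "Cf f" using choice_function_F[OF f] .
  let ?X = "restr (Ef E f) x" and ?Y = "restr (Ef E f) (advance t)"
  show X: "inB (Ef E f) b ?X" and Y: "inB (Ef E f) b ?Y"
    using stable_acceptable_F[OF x_stable f] stable_acceptable_F[OF stable_t f]
    by (simp_all add: acceptable_def)
  have "Cf f (sup ?Y ?X) = ?Y"
  proof (rule C_sup_eq_if_excess_uninteresting[OF stable_acceptable_F[OF stable_t f] X])
    fix c assume "?Y c < ?X c"
    then have c: "c \<in> c_edges R" "snd c = f"
      using t by (auto simp: restr_advance_cases Ef_def split: if_splits)
    have "\<not> blocking E b Cw Cf (advance t) c" using stable_t unfolding stable_def by blast
    then show "\<not> interesting (Ef E f) b (Cf f) ?Y c"
      using c_edge_interesting_W[OF t stable_t c(1)] c c_edges_subset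
      unfolding blocking_def by blast
  qed
  then show "Cf f (sup ?X ?Y) = ?Y" by (simp add: sup_commute)
qed

lemma two_le_card_a_edges: "2 \<le> card (a_edges R)"
proof -
  have "length R \<noteq> 2"
  proof
    assume n: "length R = 2"
    have "snd (R ! 1) = snd (R ! 0)" using legal_fpair_parts(1)[of 0] n by simp
    moreover have "fst (R ! 0) = fst (R ! 1)" using essential_wpair_parts(1)[of 1] n by simp
    ultimately have "R ! 0 = R ! 1" by (simp add: prod_eq_iff)
    then show False using R_distinct n by (simp add: nth_eq_iff_index_eq)
  qed
  moreover obtain k where "length R = 2 * k" using even_length by (rule evenE)
  moreover have "length R \<noteq> 0" using R_nonempty by simp
  ultimately have "2 < length R" by presburger
  then have "{R ! 0, R ! 2} \<subseteq> a_edges R" unfolding a_edges_def by force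
  moreover have "R ! 0 \<noteq> R ! 2"
    using nth_eq_iff_index_eq[OF R_distinct, of 0 2] \<open>2 < length R\<close> by linarith
  moreover have "finite (a_edges R)" unfolding a_edges_def by simp
  ultimately show ?thesis by (metis card_2_iff card_mono)
qed

end

section \<open>Length of a full route\<close>

context choice_graph
begin

text \<open>A bound on how often \<open>e\<close> has been raised so far: \<open>x e\<close> while \<open>e\<close> can still be raised,
  \<open>b e\<close> once it has left \<open>U\<^sub>F\<^sup>+\<close>.\<close>

definition budget :: "('w, 'f) vec \<Rightarrow> 'w \<times> 'f \<Rightarrow> int" where
  "budget x e = (if e \<in> Uplus E b Cf x then x e else int (b e))"

lemma budget_le_cap: "stable W F E b Cw Cf x \<Longrightarrow> e \<in> E \<Longrightarrow> budget x e \<le> int (b e)"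
  using stable_bounds by (simp add: budget_def)

lemma budget_nonneg: "stable W F E b Cw Cf x \<Longrightarrow> e \<in> E \<Longrightarrow> 0 \<le> budget x e"
  using stable_bounds by (simp add: budget_def)

end

lemma (in rotation_at) budget_advance:
  assumes e: "e \<in> E" and t: "1 \<le> t" and stable_t: "stable W F E b Cw Cf (advance t)"
  shows "budget x e + of_bool (e \<in> a_edges R) \<le> budget (advance t) e"
proof -
  have Uplus: "Uplus E b Cf (advance t) \<subseteq> Uplus E b Cf x"
    using Uplus_advance_subset[OF t stable_t] .
  have bounds: "x e \<le> int (b e)" "advance t e \<le> int (b e)"
    using stable_bounds[OF x_stable e] stable_bounds[OF stable_t e] by auto
  consider (a) "e \<in> a_edges R" | (c) "e \<in> c_edges R" | (neither) "e \<notin> a_edges R" "e \<notin> c_edges R"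
    by blast
  then show ?thesis
  proof cases
    case a
    then have "e \<in> Uplus E b Cf x" "advance t e = x e + int t"
      using a_edges_Uplus by (auto simp: advance_apply)
    then show ?thesis using a t bounds by (simp add: budget_def)
  next
    case c
    then have "e \<notin> Uplus E b Cf x" using c_edges_Uminus Uplus_Uminus_disjoint by blast
    then show ?thesis using c a_c_disjoint Uplus by (auto simp: budget_def)
  next
    case neither
    then have "advance t e = x e" by (simp add: advance_apply)
    then show ?thesis using neither Uplus bounds by (auto simp: budget_def)
  qed
qed

context choice_graph
begin

lemma full_route_rotation_at:
  "full_route W F E b Cw Cf xs Rs \<Longrightarrow> i < length Rs \<Longrightarrow>
    rotation_at W F E b Cw Cf (xs ! i) (Rs ! i)"
  using choice_graph_axioms by (simp add: rotation_at_def rotation_at_axioms_def full_route_def)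

lemma full_route_stable:
  assumes route: "full_route W F E b Cw Cf xs Rs" and m: "m \<le> length Rs"
  shows "stable W F E b Cw Cf (xs ! m)"
proof (cases "m = length Rs")
  case True
  then show ?thesis using route by (simp add: full_route_def is_xmax_def)
next
  case False
  then show ?thesis using rotation_at.x_stable[OF full_route_rotation_at[OF route]] m by simp
qed

lemma card_raising_rotations_le:
  assumes route: "full_route W F E b Cw Cf xs Rs" and e: "e \<in> E"
  shows "card {i. i < length Rs \<and> e \<in> a_edges (Rs ! i)} \<le> b e"
proof -
  have "int (card {i. i < m \<and> e \<in> a_edges (Rs ! i)}) \<le> budget (xs ! m) e" if "m \<le> length Rs" for m
    using that
  proof (induction m)
    case 0
    then show ?case using budget_nonneg[OF full_route_stable[OF route] e] by simp
  next
    case (Suc m)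
    interpret rotation_at W F E b Cw Cf "xs ! m" "Rs ! m"
      using full_route_rotation_at[OF route] Suc.prems by simp
    let ?t = "tau W F E b Cw Cf (xs ! m) (Rs ! m)"
    have step: "xs ! Suc m = advance ?t"
      using route Suc.prems by (simp add: full_route_def advance_def)
    have "{i. i < Suc m \<and> e \<in> a_edges (Rs ! i)} =
        {i. i < m \<and> e \<in> a_edges (Rs ! i)} \<union> (if e \<in> a_edges (Rs ! m) then {m} else {})"
      by (auto simp: less_Suc_eq)
    then have "int (card {i. i < Suc m \<and> e \<in> a_edges (Rs ! i)})
        = int (card {i. i < m \<and> e \<in> a_edges (Rs ! i)}) + of_bool (e \<in> a_edges (Rs ! m))"
      by simp
    also have "\<dots> \<le> budget (xs ! m) e + of_bool (e \<in> a_edges (Rs ! m))"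
      using Suc by simp
    also have "\<dots> \<le> budget (xs ! Suc m) e"
      using budget_advance[OF e one_le_tau] full_route_stable[OF route Suc.prems] step by simp
    finally show ?case .
  qed
  then show ?thesis
    using budget_le_cap[OF full_route_stable[OF route] e] by (meson order.refl order_trans of_nat_le_iff)
qed

theorem full_route_length_bound:
  assumes route: "full_route W F E b Cw Cf xs Rs"
  shows "2 * length Rs \<le> Max (b ` E) * card E"
proof -
  let ?N = "length Rs"
  have "2 * ?N = (\<Sum>i<?N. 2)" by simp
  also have "\<dots> \<le> (\<Sum>i<?N. card (a_edges (Rs ! i)))"
    using rotation_at.two_le_card_a_edges[OF full_route_rotation_at[OF route]] by (intro sum_mono) simp
  also have "\<dots> = (\<Sum>i<?N. card {e \<in> E. e \<in> a_edges (Rs ! i)})"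
    using rotation_at.a_edges_subset[OF full_route_rotation_at[OF route]]
    by (intro sum.cong) (auto simp: Int_absorb1 Collect_conj_eq Int_commute)
  also have "\<dots> = (\<Sum>e\<in>E. card {i \<in> {..<?N}. e \<in> a_edges (Rs ! i)})"
    using finite_E by (intro sum_multicount_gen) auto
  also have "\<dots> \<le> (\<Sum>e\<in>E. b e)"
    using card_raising_rotations_le[OF route] by (intro sum_mono) (simp add: Collect_conj_eq lessThan_def Int_commute)
  also have "\<dots> \<le> card E * Max (b ` E)"
    using sum_bounded_above[of E b "Max (b ` E)"] finite_E by simp
  finally show ?thesis by (simp add: mult.commute)
qed

end

theorem lemma6p2:
  fixes W :: "'w set" and F :: "'f set" and E :: "('w \<times> 'f) set"
    and b :: "'w \<times> 'f \<Rightarrow> nat"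
    and Cw :: "'w \<Rightarrow> ('w, 'f) cfun" and Cf :: "'f \<Rightarrow> ('w, 'f) cfun"
    and xs :: "('w, 'f) vec list" and Rs :: "('w \<times> 'f) list list"
  assumes "finite W" and "finite F" and "E \<subseteq> W \<times> F"
    and "\<forall>w\<in>W. choice_fun (Ew E w) b (Cw w)"
    and "\<forall>f\<in>F. choice_fun (Ef E f) b (Cf f)"
    and "full_route W F E b Cw Cf xs Rs"
  shows "2 * length Rs \<le> Max (b ` E) * card E"
proof -
  interpret choice_graph W F E b Cw Cf
    using assms(1-5) by unfold_locales
  show ?thesis using full_route_length_bound[OF assms(6)] .
qed

end
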